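(* Let $M(C,\bar\xi,\pi)$ be a Myller configuration with Darboux frame $(\bar\xi,\bar\mu,\bar v)$ and invariants $G,K,T$, with $(G(s),T(s))\neq(0,0)$ for all $s$. Define $$\sigma_\mu=\frac{G^{2}\left(\frac{T}{G}\right)'-(G^{2}+T^{2})K}{(G^{2}+T^{2})^{3/2}},$$ where $G^2\left(\frac{T}{G}\right)'$ stands for $T'G-TG'$. Then $C$ is a $\bar\mu$-helix in $M$ if and only if $\sigma_\mu$ is constant; in that case the constant angle $\eta$ between $\bar\mu$ and the axis satisfies $\cot\eta=\mp\sigma_\mu$ (for an appropriate sign).
   Context: Let $C$ be a smooth curve in $E^3$ parametrized by arclength $s$; primes denote $d/ds$. A Myller configuration $M(C,\bar\xi,\pi)$ consists of a smooth unit vector field $\bar\xi$ along $C$ and a smooth oriented plane field $\pi$ with $\bar\xi\in\pi$; $\bar v$ is the unit normal of $\pi$, $\bar\mu=\bar v\times\bar\xi$, and the Darboux frame satisfies $\bar\xi'=G\bar\mu+K\bar v$, $\bar\mu'=-G\bar\xi+T\bar v$, $\bar v'=-K\bar\xi-T\bar\mu$. $C$ is a $\bar\mu$-helix in $M$ if there are a constant unit vector $\bar d_\mu$ and a constant $\eta$ with $\langle\bar\mu,\bar d_\mu\rangle=\cos\eta$ along $C$. *)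

theory Defs
  imports "HOL-Analysis.Analysis" "HOL-Analysis.Cross3"
begin

text \<open>A Myller configuration M(C, xi, pi) along a curve C (position r, arclength
parameter s ranging over the interval I), with Darboux frame (xi, mu, v):
xi unit tangent field of the configuration, v unit normal of the plane field pi,
mu = v x xi, and invariants G, K, T given by the Darboux equations.\<close>

definition myller_configuration ::
  "real set \<Rightarrow> (real \<Rightarrow> real^3) \<Rightarrow> (real \<Rightarrow> real^3) \<Rightarrow> (real \<Rightarrow> real^3) \<Rightarrow> (real \<Rightarrow> real^3)
   \<Rightarrow> (real \<Rightarrow> real) \<Rightarrow> (real \<Rightarrow> real) \<Rightarrow> (real \<Rightarrow> real) \<Rightarrow> bool" where
  "myller_configuration I r xi mu v G K T \<longleftrightarrow>
     (\<forall>s\<in>I.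
        (\<exists>t. (r has_vector_derivative t) (at s) \<and> norm t = 1) \<and>
        norm (xi s) = 1 \<and> norm (v s) = 1 \<and> xi s \<bullet> v s = 0 \<and>
        mu s = cross3 (v s) (xi s) \<and>
        (xi has_vector_derivative (G s *\<^sub>R mu s + K s *\<^sub>R v s)) (at s) \<and>
        (mu has_vector_derivative (- G s *\<^sub>R xi s + T s *\<^sub>R v s)) (at s) \<and>
        (v has_vector_derivative (- K s *\<^sub>R xi s - T s *\<^sub>R mu s)) (at s))"

definition mu_helix_axis :: "real set \<Rightarrow> (real \<Rightarrow> real^3) \<Rightarrow> real^3 \<Rightarrow> real \<Rightarrow> bool" where
  "mu_helix_axis I mu d \<eta> \<longleftrightarrow> norm d = 1 \<and> (\<forall>s\<in>I. mu s \<bullet> d = cos \<eta>)"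

definition mu_helix :: "real set \<Rightarrow> (real \<Rightarrow> real^3) \<Rightarrow> bool" where
  "mu_helix I mu \<longleftrightarrow> (\<exists>d \<eta>. mu_helix_axis I mu d \<eta>)"

definition sigma_mu :: "(real \<Rightarrow> real) \<Rightarrow> (real \<Rightarrow> real) \<Rightarrow> (real \<Rightarrow> real) \<Rightarrow> real \<Rightarrow> real" where
  "sigma_mu G K T s =
     (deriv T s * G s - T s * deriv G s - ((G s)\<^sup>2 + (T s)\<^sup>2) * K s)
       / ((G s)\<^sup>2 + (T s)\<^sup>2) powr (3/2)"

end

theory Submission
  imports Defs
begin

(* The unit vector mu_binormal = (T xi + G v) / sqrt (G^2 + T^2) completes mu and its derivative
   dmu = - G xi + T v to an orthonormal frame along the spherical curve mu, and
   mu_binormal' = - sigma_mu dmu: sigma_mu is the ratio of torsion to curvature of mu, and the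
   theorem is Lancret's theorem for this curve.
   An axis d with mu . d = cos eta is orthogonal to dmu, so d = cos eta mu + k mu_binormal, where
   k = mu_binormal . d is constant because its derivative is - sigma_mu (dmu . d) = 0.
   Differentiating this decomposition gives cos eta = k sigma_mu, and k = +-sin eta as d is a unit
   vector. Conversely, if sigma_mu = c then c mu + mu_binormal has derivative (c - sigma_mu) dmu = 0,
   so its normalisation is an axis. *)

lemma powr_three_halves: "0 \<le> x \<Longrightarrow> x powr (3/2) = sqrt x ^ 3"
  for x :: real
  using powr_half_sqrt_powr[of x 3] by (simp add: real_sqrt_power)

lemma has_vector_derivative_inner_const:
  fixes f :: "real \<Rightarrow> 'a::real_inner"
  shows "(f has_vector_derivative f') F \<Longrightarrow> ((\<lambda>s. f s \<bullet> d) has_vector_derivative f' \<bullet> d) F"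
  by (rule bounded_linear.has_vector_derivative[OF bounded_linear_inner_left])

lemma vector_derivative_eq_0_if_constant_on:
  fixes f :: "real \<Rightarrow> 'a::real_normed_vector"
  assumes "(f has_vector_derivative f') (at x)" "open S" "x \<in> S" "\<And>y. y \<in> S \<Longrightarrow> f y = c"
  shows "f' = 0"
proof -
  have "(f has_vector_derivative 0) (at x)"
    using has_vector_derivative_transform_within_open[OF has_vector_derivative_const assms(2,3)] assms(4)
    by metis
  then show ?thesis using vector_derivative_unique_at[OF assms(1)] by blast
qed

lemma cross3_orthonormal:
  fixes x y :: "real^3"
  assumes "norm x = 1" "norm y = 1" "x \<bullet> y = 0"
  shows "norm (cross3 y x) = 1" "cross3 y x \<bullet> x = 0" "cross3 y x \<bullet> y = 0"
proof -
  have "(norm (cross3 y x))\<^sup>2 = 1"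
    using norm_cross_dot[of y x] assms by (simp add: inner_commute)
  then show "norm (cross3 y x) = 1"
    using norm_ge_zero[of "cross3 y x"] by (simp add: power2_eq_1_iff)
  show "cross3 y x \<bullet> x = 0" "cross3 y x \<bullet> y = 0" by (simp_all add: dot_cross_self)
qed

lemma cross3_orthonormal_expansion:
  fixes x y z :: "real^3"
  assumes "norm x = 1" "norm y = 1" "x \<bullet> y = 0"
  shows "z = (z \<bullet> x) *\<^sub>R x + (z \<bullet> cross3 y x) *\<^sub>R cross3 y x + (z \<bullet> y) *\<^sub>R y"
proof -
  define n where "n = cross3 y x"
  define w where "w = z - (z \<bullet> x) *\<^sub>R x - (z \<bullet> n) *\<^sub>R n - (z \<bullet> y) *\<^sub>R y"
  have unit: "x \<bullet> x = 1" "y \<bullet> y = 1" "n \<bullet> n = 1"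
    using assms cross3_orthonormal(1)[OF assms] by (simp_all add: n_def norm_eq_1)
  have orth: "w \<bullet> x = 0" "w \<bullet> y = 0" "w \<bullet> n = 0"
    using unit assms(3) cross3_orthonormal(2,3)[OF assms]
    by (simp_all add: w_def n_def algebra_simps inner_commute)
  have "cross3 w n = 0"
    using Lagrange[of w y x] orth by (simp add: n_def)
  then have "w = 0"
    using Lagrange[of n w n] unit orth by (simp add: inner_commute)
  then show ?thesis by (simp add: w_def n_def algebra_simps)
qed

lemma binormal_derivative_coefficients:
  fixes q q' \<sigma> G G' T T' K :: real
  assumes "0 < q" "q * q = G * G + T * T" "q * q' = G * G' + T * T'"
    and "\<sigma> * (q * q * q) = T' * G - T * G' - q * q * K"
  shows "(T' * q - T * q') / (q * q) - G / q * K = \<sigma> * G"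
    and "T / q * K + (G' * q - G * q') / (q * q) = - \<sigma> * T"
proof -
  have "(T' * q - T * q' - G * K * q - \<sigma> * G * (q * q)) * q = 0"
    and "(G' * q - G * q' + T * K * q + \<sigma> * T * (q * q)) * q = 0"
    using assms(2-4) by algebra+
  then have "T' * q - T * q' - G * K * q - \<sigma> * G * (q * q) = 0"
    and "G' * q - G * q' + T * K * q + \<sigma> * T * (q * q) = 0"
    using assms(1) by simp_all
  then show "(T' * q - T * q') / (q * q) - G / q * K = \<sigma> * G"
    and "T / q * K + (G' * q - G * q') / (q * q) = - \<sigma> * T"
    using assms(1) by (simp_all add: field_simps)
qed

locale myller_frame =
  fixes I :: "real set" and r xi mu v :: "real \<Rightarrow> real^3" and G K T :: "real \<Rightarrow> real"
  assumes convex_I: "convex I" and open_I: "open I"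
    and config: "myller_configuration I r xi mu v G K T"
    and differentiable_G: "s \<in> I \<Longrightarrow> G differentiable (at s)"
    and differentiable_T: "s \<in> I \<Longrightarrow> T differentiable (at s)"
    and GT_nonzero: "s \<in> I \<Longrightarrow> (G s, T s) \<noteq> (0, 0)"
begin

definition dmu :: "real \<Rightarrow> real^3"
  where "dmu s = - G s *\<^sub>R xi s + T s *\<^sub>R v s"

definition mu_speed :: "real \<Rightarrow> real"
  where "mu_speed s = sqrt ((G s)\<^sup>2 + (T s)\<^sup>2)"

definition mu_binormal :: "real \<Rightarrow> real^3"
  where "mu_binormal s = (T s / mu_speed s) *\<^sub>R xi s + (G s / mu_speed s) *\<^sub>R v s"

lemma
  assumes "s \<in> I"
  shows xi_unit: "norm (xi s) = 1" and v_unit: "norm (v s) = 1"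
    and xi_v_orthogonal: "xi s \<bullet> v s = 0" and mu_eq_cross3: "mu s = cross3 (v s) (xi s)"
    and xi_has_derivative: "(xi has_vector_derivative (G s *\<^sub>R mu s + K s *\<^sub>R v s)) (at s)"
    and mu_has_derivative: "(mu has_vector_derivative dmu s) (at s)"
    and v_has_derivative: "(v has_vector_derivative (- K s *\<^sub>R xi s - T s *\<^sub>R mu s)) (at s)"
  using assms config unfolding myller_configuration_def dmu_def by auto

lemma inner_frame:
  assumes "s \<in> I"
  shows "xi s \<bullet> xi s = 1" "v s \<bullet> v s = 1" "mu s \<bullet> mu s = 1"
    "xi s \<bullet> v s = 0" "v s \<bullet> xi s = 0" "mu s \<bullet> xi s = 0" "xi s \<bullet> mu s = 0"
    "mu s \<bullet> v s = 0" "v s \<bullet> mu s = 0"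
  using cross3_orthonormal[OF xi_unit v_unit xi_v_orthogonal, OF assms assms assms]
    xi_unit[OF assms] v_unit[OF assms] xi_v_orthogonal[OF assms] mu_eq_cross3[OF assms]
  by (simp_all add: norm_eq_1 inner_commute)

lemma mu_speed_squared: "(mu_speed s)\<^sup>2 = (G s)\<^sup>2 + (T s)\<^sup>2"
  by (simp add: mu_speed_def)

lemma mu_speed_pos: "s \<in> I \<Longrightarrow> 0 < mu_speed s"
  using GT_nonzero by (auto simp: mu_speed_def sum_power2_gt_zero_iff)

lemma inner_mu_binormal:
  assumes "s \<in> I"
  shows "mu_binormal s \<bullet> mu_binormal s = 1" "mu s \<bullet> mu_binormal s = 0"
    "mu_binormal s \<bullet> dmu s = 0" "mu s \<bullet> dmu s = 0" "dmu s \<bullet> dmu s = (mu_speed s)\<^sup>2"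
proof -
  have "mu_binormal s \<bullet> mu_binormal s = (G s / mu_speed s)\<^sup>2 + (T s / mu_speed s)\<^sup>2"
    by (simp add: mu_binormal_def inner_add_left inner_add_right inner_frame[OF assms]
        power2_eq_square)
  also have "\<dots> = ((G s)\<^sup>2 + (T s)\<^sup>2) / (mu_speed s)\<^sup>2"
    by (simp add: power_divide add_divide_distrib)
  also have "\<dots> = 1"
    using mu_speed_pos[OF assms] by (simp add: mu_speed_squared[symmetric])
  finally show "mu_binormal s \<bullet> mu_binormal s = 1" .
  show "mu s \<bullet> mu_binormal s = 0" "mu_binormal s \<bullet> dmu s = 0" "mu s \<bullet> dmu s = 0"
    by (simp_all add: mu_binormal_def dmu_def inner_add_left inner_add_right inner_frame[OF assms]
        algebra_simps)
  show "dmu s \<bullet> dmu s = (mu_speed s)\<^sup>2"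
    unfolding mu_speed_squared
    by (simp add: dmu_def inner_diff_left inner_diff_right inner_frame[OF assms] power2_eq_square)
qed

lemma orthogonal_dmu_expansion:
  assumes "s \<in> I" "x \<bullet> dmu s = 0"
  shows "x = (x \<bullet> mu s) *\<^sub>R mu s + (x \<bullet> mu_binormal s) *\<^sub>R mu_binormal s"
proof -
  define a c q where "a = x \<bullet> xi s" and "c = x \<bullet> v s" and "q = mu_speed s"
  have q: "q \<noteq> 0" "q * q = G s * G s + T s * T s"
    using mu_speed_pos[OF assms(1)] mu_speed_squared[of s] unfolding q_def power2_eq_square by auto
  have Gac: "G s * a = T s * c"
    using assms(2) by (simp add: dmu_def a_def c_def inner_add_right inner_diff_right)
  have xb: "x \<bullet> mu_binormal s = (T s * a + G s * c) / q"
    by (simp add: mu_binormal_def a_def c_def q_def inner_add_right add_divide_distrib)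
  have "(T s * a + G s * c) * T s = a * (q * q)" "(T s * a + G s * c) * G s = c * (q * q)"
    using q(2) Gac by algebra+
  then have "(x \<bullet> mu_binormal s) * (T s / q) = a" "(x \<bullet> mu_binormal s) * (G s / q) = c"
    using q(1) by (simp_all add: xb)
  then have "(x \<bullet> mu_binormal s) *\<^sub>R mu_binormal s = a *\<^sub>R xi s + c *\<^sub>R v s"
    by (simp add: mu_binormal_def q_def scaleR_add_right)
  moreover have "x = a *\<^sub>R xi s + (x \<bullet> mu s) *\<^sub>R mu s + c *\<^sub>R v s"
    using cross3_orthonormal_expansion[OF xi_unit v_unit xi_v_orthogonal, OF assms(1) assms(1) assms(1)]
      mu_eq_cross3[OF assms(1)] by (simp add: a_def c_def)
  ultimately show ?thesis by (simp add: algebra_simps)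
qed

lemma mu_speed_has_derivative:
  assumes "s \<in> I"
  shows "(mu_speed has_real_derivative (G s * deriv G s + T s * deriv T s) / mu_speed s) (at s)"
proof -
  have "(G has_real_derivative deriv G s) (at s)" "(T has_real_derivative deriv T s) (at s)"
    using differentiable_G differentiable_T assms DERIV_deriv_iff_real_differentiable by blast+
  moreover have "G s \<noteq> 0 \<or> T s \<noteq> 0"
    using GT_nonzero[OF assms] by auto
  ultimately show ?thesis
    unfolding mu_speed_def[abs_def]
    by (auto intro!: derivative_eq_intros simp: field_simps not_sum_power2_lt_zero)
qed

lemma frame_combination_has_derivative:
  assumes "s \<in> I" "(\<alpha> has_real_derivative \<alpha>') (at s)" "(\<beta> has_real_derivative \<beta>') (at s)"
  shows "((\<lambda>s. \<alpha> s *\<^sub>R xi s + \<beta> s *\<^sub>R v s) has_vector_derivative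
           (\<alpha>' - \<beta> s * K s) *\<^sub>R xi s + (\<alpha> s * G s - \<beta> s * T s) *\<^sub>R mu s
             + (\<alpha> s * K s + \<beta>') *\<^sub>R v s) (at s)"
proof -
  have "((\<lambda>s. \<alpha> s *\<^sub>R xi s + \<beta> s *\<^sub>R v s) has_vector_derivative
      (\<alpha> s *\<^sub>R (G s *\<^sub>R mu s + K s *\<^sub>R v s) + \<alpha>' *\<^sub>R xi s)
      + (\<beta> s *\<^sub>R (- K s *\<^sub>R xi s - T s *\<^sub>R mu s) + \<beta>' *\<^sub>R v s)) (at s)"
    by (intro has_vector_derivative_add has_vector_derivative_scaleR assms
        xi_has_derivative v_has_derivative)
  then show ?thesis by (simp add: algebra_simps)
qed

lemma sigma_mu_eq:
  "sigma_mu G K T s =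
     (deriv T s * G s - T s * deriv G s - (mu_speed s)\<^sup>2 * K s) / mu_speed s ^ 3"
  by (simp add: sigma_mu_def mu_speed_squared powr_three_halves) (simp add: mu_speed_def)

lemma mu_binormal_has_derivative:
  assumes "s \<in> I"
  shows "(mu_binormal has_vector_derivative - sigma_mu G K T s *\<^sub>R dmu s) (at s)"
proof -
  define q q' \<sigma> where "q = mu_speed s" and "q' = (G s * deriv G s + T s * deriv T s) / q"
    and "\<sigma> = sigma_mu G K T s"
  have q: "0 < q" "q * q = G s * G s + T s * T s" "q * q' = G s * deriv G s + T s * deriv T s"
    using mu_speed_pos[OF assms] mu_speed_squared[of s] by (simp_all add: q_def q'_def power2_eq_square)
  have \<sigma>: "\<sigma> * (q * q * q) = deriv T s * G s - T s * deriv G s - q * q * K s"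
    using q(1) by (simp add: \<sigma>_def q_def sigma_mu_eq field_simps power2_eq_square power3_eq_cube)
  note coefficients = binormal_derivative_coefficients[OF q \<sigma>]
  have dq: "(mu_speed has_real_derivative q') (at s)"
    using mu_speed_has_derivative[OF assms] by (simp add: q_def q'_def)
  have dG: "(G has_real_derivative deriv G s) (at s)" and dT: "(T has_real_derivative deriv T s) (at s)"
    using differentiable_G differentiable_T assms DERIV_deriv_iff_real_differentiable by blast+
  have "(mu_binormal has_vector_derivative
      ((deriv T s * q - T s * q') / (q * q) - G s / q * K s) *\<^sub>R xi s
      + (T s / q * G s - G s / q * T s) *\<^sub>R mu s
      + (T s / q * K s + (deriv G s * q - G s * q') / (q * q)) *\<^sub>R v s) (at s)"
    using frame_combination_has_derivative[OF assms DERIV_divide[OF dT dq] DERIV_divide[OF dG dq]] q(1)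
    unfolding mu_binormal_def[abs_def] q_def by simp
  then show ?thesis
    unfolding coefficients by (simp add: \<sigma>_def dmu_def algebra_simps)
qed

lemma mu_combination_has_derivative:
  assumes "s \<in> I"
  shows "((\<lambda>s. a *\<^sub>R mu s + k *\<^sub>R mu_binormal s) has_vector_derivative
           (a - k * sigma_mu G K T s) *\<^sub>R dmu s) (at s)"
proof -
  have "((\<lambda>s. a *\<^sub>R mu s + k *\<^sub>R mu_binormal s) has_vector_derivative
      a *\<^sub>R dmu s + k *\<^sub>R (- sigma_mu G K T s *\<^sub>R dmu s)) (at s)"
    by (intro has_vector_derivative_add bounded_linear.has_vector_derivative[OF bounded_linear_scaleR_right]
        mu_has_derivative mu_binormal_has_derivative assms)
  then show ?thesis
    by (simp add: algebra_simps)
qed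

lemma helix_axis_decomposition:
  assumes axis: "mu_helix_axis I mu d \<eta>"
  obtains k where "\<And>s. s \<in> I \<Longrightarrow> d = cos \<eta> *\<^sub>R mu s + k *\<^sub>R mu_binormal s"
proof -
  have mu_d: "\<And>s. s \<in> I \<Longrightarrow> mu s \<bullet> d = cos \<eta>"
    using axis by (simp add: mu_helix_axis_def)
  have dmu_d: "dmu s \<bullet> d = 0" if "s \<in> I" for s
    using vector_derivative_eq_0_if_constant_on[OF has_vector_derivative_inner_const
        [OF mu_has_derivative[OF that]] open_I that mu_d] .
  have "((\<lambda>s. mu_binormal s \<bullet> d) has_vector_derivative 0) (at s within I)" if "s \<in> I" for s
    using has_vector_derivative_inner_const[OF mu_binormal_has_derivative[OF that], of d] dmu_d[OF that]
    by (simp add: has_vector_derivative_at_within)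
  then obtain k where k: "\<And>s. s \<in> I \<Longrightarrow> mu_binormal s \<bullet> d = k"
    using has_vector_derivative_zero_constant[OF convex_I] by blast
  show thesis
  proof
    fix s assume "s \<in> I"
    then show "d = cos \<eta> *\<^sub>R mu s + k *\<^sub>R mu_binormal s"
      using orthogonal_dmu_expansion[of s d] dmu_d mu_d k by (simp add: inner_commute)
  qed
qed

lemma cot_eq_sigma_mu_if_helix_axis:
  assumes axis: "mu_helix_axis I mu d \<eta>"
  shows "(\<forall>s\<in>I. cot \<eta> = sigma_mu G K T s) \<or> (\<forall>s\<in>I. cot \<eta> = - sigma_mu G K T s)"
proof -
  obtain k where d_eq: "\<And>s. s \<in> I \<Longrightarrow> d = cos \<eta> *\<^sub>R mu s + k *\<^sub>R mu_binormal s"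
    using helix_axis_decomposition[OF axis] by blast
  have cos_eq: "cos \<eta> = k * sigma_mu G K T s" if "s \<in> I" for s
  proof -
    have "(cos \<eta> - k * sigma_mu G K T s) *\<^sub>R dmu s = 0"
      using vector_derivative_eq_0_if_constant_on[OF mu_combination_has_derivative[OF that] open_I that]
        d_eq by (metis (no_types, lifting))
    moreover have "dmu s \<noteq> 0"
      using inner_mu_binormal(5)[OF that] mu_speed_pos[OF that] by auto
    ultimately show ?thesis by simp
  qed
  have k_sin: "k = sin \<eta> \<or> k = - sin \<eta>" if "s \<in> I" for s
  proof -
    have "1 = (cos \<eta>)\<^sup>2 + k\<^sup>2"
      using axis d_eq[OF that] inner_frame(3)[OF that] inner_mu_binormal(1,2)[OF that]
      by (simp add: mu_helix_axis_def norm_eq_1 inner_add_left inner_add_right inner_commute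
          power2_eq_square)
    then have "k\<^sup>2 = (sin \<eta>)\<^sup>2"
      using sin_cos_squared_add[of \<eta>] by linarith
    then show ?thesis
      using power2_eq_iff by blast
  qed
  have sin_nonzero: "sin \<eta> \<noteq> 0" if "s \<in> I" for s
    using k_sin[OF that] cos_eq[OF that] sin_cos_squared_add[of \<eta>] by auto
  show ?thesis
  proof (cases "k = sin \<eta>")
    case True
    then have "\<forall>s\<in>I. cot \<eta> = sigma_mu G K T s"
      using cos_eq sin_nonzero by (simp add: cot_def)
    then show ?thesis ..
  next
    case False
    then have "\<forall>s\<in>I. cot \<eta> = - sigma_mu G K T s"
      using k_sin cos_eq sin_nonzero by (simp add: cot_def)
    then show ?thesis ..
  qed
qed

lemma helix_axis_if_sigma_mu_constant:
  assumes "s0 \<in> I" and sigma: "\<And>s. s \<in> I \<Longrightarrow> sigma_mu G K T s = c"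
  shows "mu_helix_axis I mu ((1 / sqrt (1 + c\<^sup>2)) *\<^sub>R (c *\<^sub>R mu s0 + mu_binormal s0))
           (arccos (c / sqrt (1 + c\<^sup>2)))"
proof -
  define D where "D s = c *\<^sub>R mu s + mu_binormal s" for s
  define \<rho> where "\<rho> = sqrt (1 + c\<^sup>2)"
  have "(D has_vector_derivative 0) (at s within I)" if "s \<in> I" for s
    using mu_combination_has_derivative[OF that, of c 1] sigma[OF that]
    unfolding D_def[abs_def] by (simp add: has_vector_derivative_at_within)
  then obtain D0 where "\<And>s. s \<in> I \<Longrightarrow> D s = D0"
    using has_vector_derivative_zero_constant[OF convex_I] by blast
  then have D: "\<And>s. s \<in> I \<Longrightarrow> D s = D s0"
    using assms(1) by metis
  have \<rho>: "0 < \<rho>" "\<rho>\<^sup>2 = 1 + c\<^sup>2"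
    by (simp_all add: \<rho>_def add_pos_nonneg)
  have "D s0 \<bullet> D s0 = \<rho>\<^sup>2"
    using inner_frame(3)[OF assms(1)] inner_mu_binormal(1,2)[OF assms(1)] \<rho>(2)
    by (simp add: D_def inner_add_left inner_add_right inner_commute power2_eq_square)
  then have "norm (D s0) = \<rho>"
    using \<rho>(1) by (simp add: norm_eq_sqrt_inner)
  then have "norm ((1 / \<rho>) *\<^sub>R D s0) = 1"
    using \<rho>(1) by simp
  moreover have "mu s \<bullet> ((1 / \<rho>) *\<^sub>R D s0) = cos (arccos (c / \<rho>))" if "s \<in> I" for s
  proof -
    have "\<bar>c\<bar> \<le> \<rho>"
      unfolding \<rho>_def by (metis real_sqrt_abs real_sqrt_le_mono le_add_same_cancel2 zero_le_one)
    then have "cos (arccos (c / \<rho>)) = c / \<rho>"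
      using \<rho>(1) by (intro cos_arccos) (auto simp: divide_simps)
    moreover have "mu s \<bullet> D s = c"
      using inner_frame(3)[OF that] inner_mu_binormal(2)[OF that] by (simp add: D_def inner_add_right)
    ultimately show ?thesis
      using D[OF that] by simp
  qed
  ultimately show ?thesis
    unfolding mu_helix_axis_def \<rho>_def[symmetric] D_def[symmetric] by blast
qed

end

theorem theorem17:
  fixes I :: "real set"
    and r xi mu v :: "real \<Rightarrow> real^3"
    and G K T :: "real \<Rightarrow> real"
  assumes I: "is_interval I" "open I" "I \<noteq> {}"
    and M: "myller_configuration I r xi mu v G K T"
    and smooth: "\<forall>s\<in>I. G differentiable (at s) \<and> T differentiable (at s) \<and> isCont K s"
    and GT: "\<forall>s\<in>I. (G s, T s) \<noteq> (0, 0)"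
  shows "(mu_helix I mu \<longleftrightarrow> (\<exists>c. \<forall>s\<in>I. sigma_mu G K T s = c))
         \<and> (\<forall>d \<eta>. mu_helix_axis I mu d \<eta> \<longrightarrow>
               (\<forall>s\<in>I. cot \<eta> = sigma_mu G K T s) \<or> (\<forall>s\<in>I. cot \<eta> = - sigma_mu G K T s))"
proof -
  interpret myller_frame I r xi mu v G K T
    using I M smooth GT by unfold_locales (auto simp: is_interval_convex)
  have "mu_helix I mu \<longleftrightarrow> (\<exists>c. \<forall>s\<in>I. sigma_mu G K T s = c)"
  proof
    assume "mu_helix I mu"
    then obtain d \<eta> where "mu_helix_axis I mu d \<eta>"
      unfolding mu_helix_def by blast
    from cot_eq_sigma_mu_if_helix_axis[OF this]
    show "\<exists>c. \<forall>s\<in>I. sigma_mu G K T s = c"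
      by (metis minus_equation_iff)
  next
    assume "\<exists>c. \<forall>s\<in>I. sigma_mu G K T s = c"
    moreover obtain s0 where "s0 \<in> I"
      using I(3) by blast
    ultimately show "mu_helix I mu"
      unfolding mu_helix_def using helix_axis_if_sigma_mu_constant by blast
  qed
  then show ?thesis
    using cot_eq_sigma_mu_if_helix_axis by blast
qed

end
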